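(* Let $S=\{\rho_1=0<\rho_2<\cdots\}$ be a numerical semigroup and $\rho\in S$. Then $\#A[\rho]$ is odd if and only if $\rho\in 2S$. In this case, if $\rho=2\rho_i$, then $\#A[\rho]\le 2i-1$.
   Context: A numerical semigroup is a submonoid $S$ of $(\mathbb{N}_0,+)$ with finite complement, with elements listed increasingly. For $\rho\in S$, $A[\rho]=\{p\in S:\ \rho-p\in S\}$. $2S=\{2s:\ s\in S\}$. *)

theory Defs
  imports Main "HOL-Library.Infinite_Set"
begin

definition numerical_semigroup :: "nat set \<Rightarrow> bool" where
  "numerical_semigroup S \<longleftrightarrow> 0 \<in> S \<and> (\<forall>a\<in>S. \<forall>b\<in>S. a + b \<in> S) \<and> finite (UNIV - S)"

text \<open>The i-th element (1-indexed) of S listed increasingly: rho_1 = 0 < rho_2 < ...\<close>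
definition sg_elem :: "nat set \<Rightarrow> nat \<Rightarrow> nat" where
  "sg_elem S i = enumerate S (i - 1)"

definition Aset :: "nat set \<Rightarrow> nat \<Rightarrow> nat set" where
  "Aset S \<rho> = {p \<in> S. p \<le> \<rho> \<and> \<rho> - p \<in> S}"

definition double_set :: "nat set \<Rightarrow> nat set" where
  "double_set S = {2 * s | s. s \<in> S}"

end

theory Submission
  imports Defs
begin

text \<open>The reflection \<open>p \<mapsto> \<rho> - p\<close> is an involution of \<open>A[\<rho>]\<close> exchanging the elements below
  and above \<open>\<rho>/2\<close>; its only possible fixed point is \<open>\<rho>/2\<close>, which lies in \<open>A[\<rho>]\<close> exactly when
  \<open>\<rho> \<in> 2S\<close>. Hence \<open>#A[\<rho>]\<close> is twice the number of elements below \<open>\<rho>/2\<close>, plus one if \<open>\<rho> \<in> 2S\<close>.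
  If \<open>\<rho> = 2\<rho>\<^sub>i\<close>, the elements below \<open>\<rho>/2\<close> are among \<open>\<rho>\<^sub>1, \<dots>, \<rho>\<^sub>i\<^sub>-\<^sub>1\<close>.\<close>

lemma numerical_semigroup_infinite:
  assumes "numerical_semigroup S"
  shows "infinite S"
proof
  assume "finite S"
  with assms have "finite (S \<union> (UNIV - S))"
    unfolding numerical_semigroup_def by blast
  then show False by simp
qed

lemma card_less_enumerate:
  fixes S :: "nat set"
  assumes "infinite S"
  shows "card {s\<in>S. s < enumerate S n} = n"
proof -
  have "{s\<in>S. s < enumerate S n} = enumerate S ` {..<n}"
  proof (intro equalityI subsetI)
    fix s assume "s \<in> {s\<in>S. s < enumerate S n}"
    moreover obtain k where "enumerate S k = s"
      using \<open>s \<in> {s\<in>S. s < enumerate S n}\<close> enumerate_Ex[OF assms] by blast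
    ultimately show "s \<in> enumerate S ` {..<n}"
      using assms by auto
  qed (use assms enumerate_in_set in auto)
  then show ?thesis
    using inj_enumerate[OF assms] by (simp add: card_image inj_on_subset)
qed

lemma finite_Aset: "finite (Aset S \<rho>)"
  unfolding Aset_def by (rule finite_subset[of _ "{..\<rho>}"]) auto

lemma card_Aset:
  "card (Aset S \<rho>) =
     2 * card {p \<in> Aset S \<rho>. 2 * p < \<rho>} + (if \<rho> \<in> double_set S then 1 else 0)"
proof -
  define L where "L = {p \<in> Aset S \<rho>. 2 * p < \<rho>}"
  define H where "H = {p \<in> Aset S \<rho>. 2 * p > \<rho>}"
  define M where "M = {p \<in> Aset S \<rho>. 2 * p = \<rho>}"
  have "Aset S \<rho> = L \<union> H \<union> M"
    unfolding L_def H_def M_def by auto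
  moreover have "card (L \<union> H \<union> M) = card L + card H + card M"
    using finite_Aset[of S \<rho>]
    by (subst card_Un_disjoint; auto simp: L_def H_def M_def)+
  moreover have "bij_betw (\<lambda>p. \<rho> - p) L H"
    unfolding bij_betw_def inj_on_def L_def H_def Aset_def
    by (auto simp: image_def intro!: exI[where x="\<rho> - _"])
  then have "card H = card L"
    by (simp add: bij_betw_same_card)
  moreover have "M = (if \<rho> \<in> double_set S then {\<rho> div 2} else {})"
    unfolding M_def Aset_def double_set_def by auto
  ultimately show ?thesis
    unfolding L_def by simp
qed

corollary odd_card_Aset_iff: "odd (card (Aset S \<rho>)) \<longleftrightarrow> \<rho> \<in> double_set S"
  by (simp add: card_Aset)

lemma card_Aset_double_enumerate_le:
  fixes S :: "nat set"
  assumes "infinite S"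
  shows "card (Aset S (2 * enumerate S n)) \<le> 2 * n + 1"
proof -
  let ?r = "enumerate S n"
  have "{p \<in> Aset S (2 * ?r). 2 * p < 2 * ?r} \<subseteq> {s\<in>S. s < ?r}"
    unfolding Aset_def by auto
  then have "card {p \<in> Aset S (2 * ?r). 2 * p < 2 * ?r} \<le> n"
    using card_mono[of "{s\<in>S. s < ?r}"] card_less_enumerate[OF assms, of n] by fastforce
  then show ?thesis
    by (simp add: card_Aset)
qed

theorem mainTheorem11:
  fixes S :: "nat set" and \<rho> :: nat
  assumes "numerical_semigroup S" and "\<rho> \<in> S"
  shows "(odd (card (Aset S \<rho>)) \<longleftrightarrow> \<rho> \<in> double_set S)
       \<and> (\<forall>i\<ge>1. \<rho> = 2 * sg_elem S i \<longrightarrow> card (Aset S \<rho>) \<le> 2 * i - 1)"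
proof (intro conjI allI impI)
  show "odd (card (Aset S \<rho>)) \<longleftrightarrow> \<rho> \<in> double_set S"
    by (rule odd_card_Aset_iff)
next
  fix i :: nat
  assume "i \<ge> 1" and "\<rho> = 2 * sg_elem S i"
  then show "card (Aset S \<rho>) \<le> 2 * i - 1"
    using card_Aset_double_enumerate_le[OF numerical_semigroup_infinite[OF assms(1)], of "i - 1"]
    by (simp add: sg_elem_def)
qed

end
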